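(* Suppose that $X$ is a Polish space, $\langle R_{n}:n\in\mathbb{N}\rangle$ is a sequence of $F_{\sigma}$ subsets of $X\times X$, $\Gamma$ is a group of homeomorphisms of $X$, and $\mathcal{O}\subseteq X$ is a $\Gamma$-orbit such that for every $n\in\mathbb{N}$ and every open set $U\subseteq X$ intersecting $\mathcal{O}$ there are distinct $x,y\in\mathcal{O}\cap U$ with $\mathcal{O}\cap(R_{n})_{x}\cap(R_{n})_{y}=\emptyset$. Then there is a continuous injective map $\phi:2^{\omega}\to\overline{\mathcal{O}}$ such that for all $y,z\in2^{\omega}$: if $y\mathbin{\mathbb{E}_{0}}z$ then $\phi(y),\phi(z)$ lie in the same $\Gamma$-orbit, and if not $y\mathbin{\mathbb{E}_{0}}z$ then $(\phi(y),\phi(z))\notin\bigcup_{n\in\mathbb{N}}R_{n}$.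
   Context: For $R\subseteq X\times X$ and $x\in X$, $R_{x}=\{y\in X: (x,y)\in R\}$. $\mathbb{E}_{0}$ is the equivalence relation on $2^{\omega}$ given by $y\mathbin{\mathbb{E}_{0}}z$ iff there is $n$ with $y(m)=z(m)$ for all $m>n$. *)

theory Defs
  imports "HOL-Analysis.Analysis"
begin

definition E0 :: "(nat \<Rightarrow> bool) \<Rightarrow> (nat \<Rightarrow> bool) \<Rightarrow> bool" where
  "E0 y z \<longleftrightarrow> (\<exists>n. \<forall>m>n. y m = z m)"

definition homeo_group :: "('a::topological_space \<Rightarrow> 'a) set \<Rightarrow> bool" where
  "homeo_group G \<longleftrightarrow> id \<in> G \<and> (\<forall>f\<in>G. \<forall>g\<in>G. f \<circ> g \<in> G) \<and>
     (\<forall>f\<in>G. \<exists>g\<in>G. homeomorphism UNIV UNIV f g)"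

end

theory Submission
  imports Defs
begin

text \<open>The closed pieces of all \<open>R\<^sub>n\<close> are enumerated as \<open>C\<^sub>1, C\<^sub>2, \<dots>\<close>, and \<open>C\<^sub>0\<close> is
  the diagonal. A fusion construction yields \<open>g\<^sub>n \<in> \<Gamma>\<close>, points \<open>p\<^sub>n\<close> of the orbit and radii
  \<open>r\<^sub>n\<close>; \<open>\<phi>(y)\<close> is the unique point of the nested closed cells \<open>h\<^sub>n\<^sub>,\<^sub>y [B(p\<^sub>n, r\<^sub>n)]\<close>,
  where \<open>h\<^sub>n\<^sub>,\<^sub>y\<close> composes those \<open>g\<^sub>k\<close> with \<open>k < n\<close> and \<open>y(k)\<close> true, and the cell diameters shrink
  geometrically. If \<open>y\<close> and \<open>z\<close> agree beyond \<open>N\<close>, the single element \<open>h\<^sub>m\<^sub>,\<^sub>z \<circ> h\<^sub>m\<^sub>,\<^sub>y\<^sup>-\<^sup>1\<close>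
  of \<open>\<Gamma>\<close> (the same for all \<open>m > N\<close>) maps each cell of \<open>y\<close> onto that of \<open>z\<close>, hence \<open>\<phi>(y)\<close> to
  \<open>\<phi>(z)\<close>. At stage \<open>n\<close>, the splitting hypothesis, closedness and the finiteness of the set of
  words \<open>h\<^sub>n\<^sub>,\<^sub>y\<close> give open sets \<open>A, B\<close> meeting the orbit such that \<open>(h a, h' b)\<close> and
  \<open>(h b, h' a)\<close> avoid \<open>C\<^sub>0, \<dots>, C\<^sub>n\<close> for all such words \<open>h, h'\<close> and all \<open>a \<in> A\<close>, \<open>b \<in> B\<close>;
  \<open>g\<^sub>n\<close> is chosen to carry a small ball around an orbit point of \<open>A\<close> into \<open>B\<close>. Consequently
  \<open>(\<phi>(y), \<phi>(z)) \<notin> C\<^sub>k\<close> whenever \<open>y\<close> and \<open>z\<close> differ at some \<open>n \<ge> k\<close>: for \<open>k = 0\<close> this is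
  injectivity, and non-\<open>E\<^sub>0\<close>-related \<open>y, z\<close> differ at such \<open>n\<close> for every \<open>k\<close>.\<close>

primrec comp_prefix :: "(nat \<Rightarrow> 'a \<Rightarrow> 'a) \<Rightarrow> nat \<Rightarrow> (nat \<Rightarrow> bool) \<Rightarrow> 'a \<Rightarrow> 'a" where
  "comp_prefix g 0 y = id"
| "comp_prefix g (Suc n) y = comp_prefix g n y \<circ> (if y n then g n else id)"

lemma comp_prefix_cong:
  "(\<And>k. k < n \<Longrightarrow> g k = g' k) \<Longrightarrow> (\<And>k. k < n \<Longrightarrow> y k = z k) \<Longrightarrow>
    comp_prefix g n y = comp_prefix g' n z"
  by (induction n) auto

lemma finite_range_comp_prefix: "finite (range (comp_prefix g n))"
proof -
  have "range (comp_prefix g n) \<subseteq> (\<lambda>s. comp_prefix g n (\<lambda>k. k \<in> s)) ` Pow {..<n}"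
  proof
    fix h assume "h \<in> range (comp_prefix g n)"
    then obtain y where "h = comp_prefix g n y" by blast
    also have "\<dots> = comp_prefix g n (\<lambda>k. k \<in> {k. k < n \<and> y k})"
      by (rule comp_prefix_cong) auto
    finally show "h \<in> (\<lambda>s. comp_prefix g n (\<lambda>k. k \<in> s)) ` Pow {..<n}" by blast
  qed
  then show ?thesis by (rule finite_subset) simp
qed

lemma fsigma_family_closed_enumeration:
  fixes R :: "nat \<Rightarrow> 'a::topological_space set"
  assumes "\<And>n. fsigma_in euclidean (R n)"
  obtains D :: "nat \<Rightarrow> 'a set"
  where "\<And>k. closed (D k)" "\<And>k. \<exists>n. D k \<subseteq> R n" "(\<Union>n. R n) = (\<Union>k. D k)"
proof -
  have "\<exists>F. (\<forall>j::nat. closed (F j)) \<and> (\<Union>j. F j) = R n" for n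
  proof -
    obtain F where "\<forall>j. closedin euclidean (F j)" "\<forall>j. F j \<subseteq> F (Suc j)" "(\<Union>j. F j) = R n"
      using fsigma_in_ascending[THEN iffD1, OF assms[of n]] by (elim exE conjE)
    then show ?thesis by auto
  qed
  then obtain F :: "nat \<Rightarrow> nat \<Rightarrow> 'a set"
    where F: "\<And>n j. closed (F n j)" "\<And>n. (\<Union>j. F n j) = R n"
    by (metis choice)
  define D where "D k = F (fst (prod_decode k)) (snd (prod_decode k))" for k
  have "F n j = D (prod_encode (n, j))" for n j by (simp add: D_def)
  then have R_sub: "(\<Union>n. R n) \<subseteq> (\<Union>k. D k)" unfolding F(2)[symmetric] by blast
  have D_sub: "D k \<subseteq> R (fst (prod_decode k))" for k
    unfolding D_def F(2)[symmetric] by blast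
  show ?thesis
  proof (rule that[of D])
    show "closed (D k)" for k by (simp add: D_def F(1))
    show "\<exists>n. D k \<subseteq> R n" for k using D_sub by blast
    show "(\<Union>n. R n) = (\<Union>k. D k)" using R_sub D_sub by blast
  qed
qed

lemma finite_isCont_cball:
  fixes a :: "'a::metric_space" and K :: "('a \<Rightarrow> 'b::metric_space) set"
  assumes "finite K" "\<And>k. k \<in> K \<Longrightarrow> isCont k a" "open S" "a \<in> S" "e > 0"
  obtains d where "d > 0" "cball a d \<subseteq> S" "\<forall>k\<in>K. \<forall>u\<in>cball a d. dist (k u) (k a) < e"
proof -
  have "eventually (\<lambda>u. dist (k u) (k a) < e) (nhds a)" if "k \<in> K" for k
    using assms(2)[OF that] assms(5) unfolding eventually_nhds_conv_at isCont_def
    by (simp add: tendstoD)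
  then have "eventually (\<lambda>u. u \<in> S \<and> (\<forall>k\<in>K. dist (k u) (k a) < e)) (nhds a)"
    using assms(1,3,4) by (simp add: eventually_conj eventually_nhds_in_open eventually_ball_finite)
  then obtain d where d: "d > 0" "\<And>u. dist a u \<le> d \<Longrightarrow> u \<in> S \<and> (\<forall>k\<in>K. dist (k u) (k a) < e)"
    unfolding eventually_nhds_metric_le by (auto simp: dist_commute)
  show ?thesis
    by (rule that[OF d(1)]) (use d(2) in auto)
qed

lemma closed_vimage_map_prod:
  fixes f :: "'a::topological_space \<Rightarrow> 'b::topological_space"
    and g :: "'c::topological_space \<Rightarrow> 'd::topological_space"
  assumes "continuous_on UNIV f" "continuous_on UNIV g" "closed C"
  shows "closed (map_prod f g -` C)"
proof -
  have "continuous_on UNIV (\<lambda>x. (f (fst x), g (snd x)))"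
    by (intro continuous_on_Pair continuous_on_compose2[OF assms(1)]
        continuous_on_compose2[OF assms(2)] continuous_on_fst continuous_on_snd) auto
  then show ?thesis using closed_vimage[OF assms(3)] by (simp add: map_prod_def split_def)
qed

locale homeo_orbit =
  fixes G :: "('a::polish_space \<Rightarrow> 'a) set" and Orb :: "'a set" and x0 :: 'a
  assumes homeo_group: "homeo_group G" and Orb_eq: "Orb = (\<lambda>g. g x0) ` G"
begin

lemma id_in_G: "id \<in> G"
  using homeo_group by (simp add: homeo_group_def)

lemma comp_in_G: "f \<in> G \<Longrightarrow> g \<in> G \<Longrightarrow> f \<circ> g \<in> G"
  using homeo_group by (simp add: homeo_group_def)

lemma homeomorphism_G:
  assumes "f \<in> G" obtains g where "g \<in> G" "homeomorphism UNIV UNIV f g"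
  using homeo_group assms by (auto simp: homeo_group_def)

lemma continuous_on_G: "f \<in> G \<Longrightarrow> continuous_on UNIV f"
  by (metis homeomorphism_G homeomorphism_def)

lemma open_image_G: "f \<in> G \<Longrightarrow> open A \<Longrightarrow> open (f ` A)"
  by (metis homeomorphism_G homeomorphism_imp_open_map open_openin subtopology_UNIV)

lemma closed_image_G: "f \<in> G \<Longrightarrow> closed A \<Longrightarrow> closed (f ` A)"
  by (metis homeomorphism_G homeomorphism_imp_closed_map closed_closedin subtopology_UNIV)

lemma comp_prefix_in_G: "(\<And>k. k < n \<Longrightarrow> g k \<in> G) \<Longrightarrow> comp_prefix g n y \<in> G"
  by (induction n) (auto simp: id_in_G comp_in_G)

lemma G_image_Orb:
  assumes "f \<in> G" "x \<in> Orb" shows "f x \<in> Orb"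
proof -
  obtain h where h: "h \<in> G" "x = h x0" using assms(2) Orb_eq by blast
  then have "f x = (f \<circ> h) x0" by simp
  then show ?thesis using comp_in_G[OF assms(1) h(1)] Orb_eq by blast
qed

lemma G_vimage_Orb:
  assumes "f \<in> G" "f x \<in> Orb" shows "x \<in> Orb"
proof -
  obtain g where "g \<in> G" "homeomorphism UNIV UNIV f g" using homeomorphism_G assms(1) .
  then show ?thesis using G_image_Orb[of g "f x"] assms(2) by (simp add: homeomorphism_def)
qed

lemma Orb_transitive:
  assumes "a \<in> Orb" "b \<in> Orb" obtains g where "g \<in> G" "g a = b"
proof -
  obtain f h where fh: "f \<in> G" "a = f x0" "h \<in> G" "b = h x0" using assms Orb_eq by blast
  obtain f' where f': "f' \<in> G" "homeomorphism UNIV UNIV f f'" using homeomorphism_G fh(1) .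
  have "(h \<circ> f') a = b" using fh(2,4) f'(2) by (simp add: homeomorphism_def)
  then show ?thesis using that comp_in_G[OF fh(3) f'(1)] by blast
qed

definition orbit_splitting :: "('a \<times> 'a) set \<Rightarrow> bool" where
  "orbit_splitting C \<longleftrightarrow> (\<forall>U. open U \<longrightarrow> U \<inter> Orb \<noteq> {} \<longrightarrow>
      (\<exists>x\<in>Orb \<inter> U. \<exists>y\<in>Orb \<inter> U. Orb \<inter> C `` {x} \<inter> C `` {y} = {}))"

lemma orbit_splittingI:
  "(\<And>U. open U \<Longrightarrow> U \<inter> Orb \<noteq> {} \<Longrightarrow>
      \<exists>x\<in>Orb \<inter> U. \<exists>y\<in>Orb \<inter> U. Orb \<inter> C `` {x} \<inter> C `` {y} = {}) \<Longrightarrow> orbit_splitting C"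
  unfolding orbit_splitting_def by blast

lemma orbit_splittingD:
  "orbit_splitting C \<Longrightarrow> open U \<Longrightarrow> U \<inter> Orb \<noteq> {} \<Longrightarrow>
    \<exists>x\<in>Orb \<inter> U. \<exists>y\<in>Orb \<inter> U. Orb \<inter> C `` {x} \<inter> C `` {y} = {}"
  unfolding orbit_splitting_def by blast

lemma orbit_splitting_subset:
  assumes "C \<subseteq> D" "orbit_splitting D" shows "orbit_splitting C"
proof (rule orbit_splittingI)
  fix U :: "'a set" assume "open U" "U \<inter> Orb \<noteq> {}"
  then obtain x y where "x \<in> Orb \<inter> U" "y \<in> Orb \<inter> U" "Orb \<inter> D `` {x} \<inter> D `` {y} = {}"
    using orbit_splittingD[OF assms(2)] by blast
  moreover have "Orb \<inter> C `` {x} \<inter> C `` {y} \<subseteq> Orb \<inter> D `` {x} \<inter> D `` {y}"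
    using assms(1) by blast
  ultimately show "\<exists>x\<in>Orb \<inter> U. \<exists>y\<in>Orb \<inter> U. Orb \<inter> C `` {x} \<inter> C `` {y} = {}"
    by blast
qed

lemma orbit_splitting_Id:
  assumes "\<And>U. open U \<Longrightarrow> U \<inter> Orb \<noteq> {} \<Longrightarrow> \<exists>x y. x \<noteq> y \<and> x \<in> Orb \<inter> U \<and> y \<in> Orb \<inter> U"
  shows "orbit_splitting Id"
proof (rule orbit_splittingI)
  fix U :: "'a set" assume "open U" "U \<inter> Orb \<noteq> {}"
  then obtain x y where "x \<noteq> y" "x \<in> Orb \<inter> U" "y \<in> Orb \<inter> U" using assms by meson
  moreover have "Orb \<inter> Id `` {x} \<inter> Id `` {y} = {}" using \<open>x \<noteq> y\<close> by auto
  ultimately show "\<exists>x\<in>Orb \<inter> U. \<exists>y\<in>Orb \<inter> U. Orb \<inter> Id `` {x} \<inter> Id `` {y} = {}"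
    by blast
qed

lemma orbit_splitting_vimage:
  assumes "f \<in> G" "g \<in> G" "orbit_splitting C"
  shows "orbit_splitting (map_prod f g -` C)"
proof (rule orbit_splittingI)
  fix U :: "'a set" assume U: "open U" "U \<inter> Orb \<noteq> {}"
  then obtain u where "u \<in> U" "u \<in> Orb" by blast
  then have "f u \<in> f ` U \<inter> Orb" using G_image_Orb[OF assms(1)] by blast
  then obtain x y where xy: "x \<in> U" "y \<in> U" "f x \<in> Orb" "f y \<in> Orb"
    and disj: "Orb \<inter> C `` {f x} \<inter> C `` {f y} = {}"
    using orbit_splittingD[OF assms(3) open_image_G[OF assms(1) U(1)]] by blast
  have "Orb \<inter> (map_prod f g -` C) `` {x} \<inter> (map_prod f g -` C) `` {y}
      \<subseteq> g -` (Orb \<inter> C `` {f x} \<inter> C `` {f y})"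
    using G_image_Orb[OF assms(2)] by auto
  then have "Orb \<inter> (map_prod f g -` C) `` {x} \<inter> (map_prod f g -` C) `` {y} = {}"
    using disj by simp
  moreover have "x \<in> Orb" "y \<in> Orb" using xy(3,4) G_vimage_Orb[OF assms(1)] by auto
  ultimately show "\<exists>x\<in>Orb \<inter> U. \<exists>y\<in>Orb \<inter> U.
      Orb \<inter> (map_prod f g -` C) `` {x} \<inter> (map_prod f g -` C) `` {y} = {}"
    using xy(1,2) by blast
qed

lemma separate_by_box:
  assumes C: "closed C" "orbit_splitting C"
    and A: "open A" "A \<inter> Orb \<noteq> {}" and B: "open B" "B \<inter> Orb \<noteq> {}"
  obtains A' B' where "open A'" "open B'" "A' \<subseteq> A" "B' \<subseteq> B" "A' \<inter> Orb \<noteq> {}" "B' \<inter> Orb \<noteq> {}"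
    "(A' \<times> B') \<inter> C = {}"
proof -
  obtain b where b: "b \<in> B" "b \<in> Orb" using B by auto
  obtain x y where "x \<in> Orb \<inter> A" "y \<in> Orb \<inter> A" "Orb \<inter> C `` {x} \<inter> C `` {y} = {}"
    using orbit_splittingD[OF C(2) A] by blast
  with b obtain a where a: "a \<in> A" "a \<in> Orb" "(a, b) \<notin> C" by blast
  have "open (- C)" "(a, b) \<in> - C" using C(1) a(3) by auto
  then obtain W W' where W: "open W" "open W'" "a \<in> W" "b \<in> W'" "W \<times> W' \<subseteq> - C"
    by (rule open_prod_elim) auto
  have "open (A \<inter> W)" "open (B \<inter> W')" "A \<inter> W \<inter> Orb \<noteq> {}" "B \<inter> W' \<inter> Orb \<noteq> {}"
    using A(1) B(1) W a b by auto
  moreover have "((A \<inter> W) \<times> (B \<inter> W')) \<inter> C = {}" using W(5) by blast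
  ultimately show ?thesis using that[of "A \<inter> W" "B \<inter> W'"] by blast
qed

lemma separate_by_box_finite:
  assumes "finite \<C>" "\<And>C. C \<in> \<C> \<Longrightarrow> closed C \<and> orbit_splitting C"
    and A: "open A" "A \<inter> Orb \<noteq> {}" and B: "open B" "B \<inter> Orb \<noteq> {}"
  shows "\<exists>A' B'. open A' \<and> open B' \<and> A' \<subseteq> A \<and> B' \<subseteq> B \<and> A' \<inter> Orb \<noteq> {} \<and> B' \<inter> Orb \<noteq> {} \<and>
    (\<forall>C\<in>\<C>. (A' \<times> B') \<inter> C = {} \<and> (B' \<times> A') \<inter> C = {})"
  using assms(1,2)
proof (induction \<C> rule: finite_induct)
  case empty
  show ?case by (intro exI[of _ A] exI[of _ B]) (use A B in auto)
next
  case (insert C \<C>)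
  have members: "\<And>C. C \<in> \<C> \<Longrightarrow> closed C \<and> orbit_splitting C"
    and C: "closed C" "orbit_splitting C"
    using insert.prems by auto
  obtain A1 B1 where AB1: "open A1" "open B1" "A1 \<subseteq> A" "B1 \<subseteq> B"
    "A1 \<inter> Orb \<noteq> {}" "B1 \<inter> Orb \<noteq> {}" "\<forall>C\<in>\<C>. (A1 \<times> B1) \<inter> C = {} \<and> (B1 \<times> A1) \<inter> C = {}"
    using insert.IH[OF members] by meson
  obtain A2 B2 where AB2: "open A2" "open B2" "A2 \<subseteq> A1" "B2 \<subseteq> B1"
    "A2 \<inter> Orb \<noteq> {}" "B2 \<inter> Orb \<noteq> {}" "(A2 \<times> B2) \<inter> C = {}"
    using separate_by_box[OF C AB1(1,5,2,6)] .
  obtain B3 A3 where AB3: "open B3" "open A3" "B3 \<subseteq> B2" "A3 \<subseteq> A2"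
    "B3 \<inter> Orb \<noteq> {}" "A3 \<inter> Orb \<noteq> {}" "(B3 \<times> A3) \<inter> C = {}"
    using separate_by_box[OF C AB2(2,6,1,5)] .
  have "A3 \<times> B3 \<subseteq> A2 \<times> B2" "A2 \<times> B2 \<subseteq> A1 \<times> B1" "B3 \<times> A3 \<subseteq> B1 \<times> A1"
    using AB2(3,4) AB3(3,4) by auto
  then have "\<forall>C'\<in>insert C \<C>. (A3 \<times> B3) \<inter> C' = {} \<and> (B3 \<times> A3) \<inter> C' = {}"
    using AB1(7) AB2(7) AB3(7) by blast
  moreover have "A3 \<subseteq> A" "B3 \<subseteq> B" using AB1(3,4) AB2(3,4) AB3(3,4) by auto
  ultimately show ?case using AB3(1,2,5,6) by blast
qed

text \<open>One stage of the construction, from the ball \<open>ball p r\<close> of stage \<open>n\<close> to the ball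
  \<open>cball p' r'\<close> of stage \<open>n + 1\<close>. The separation clause handles pairs \<open>y, z\<close> with
  \<open>y n \<noteq> z n\<close>; the last clause bounds the diameter of the cells of stage \<open>n + 1\<close>.\<close>

definition fusion_step ::
    "(nat \<Rightarrow> ('a \<times> 'a) set) \<Rightarrow> (nat \<Rightarrow> 'a \<Rightarrow> 'a) \<Rightarrow> nat \<Rightarrow> 'a \<Rightarrow> real \<Rightarrow> 'a \<Rightarrow> real \<Rightarrow> bool"
  where
  "fusion_step C gs n p r p' r' \<longleftrightarrow>
     gs n \<in> G \<and> cball p' r' \<subseteq> ball p r \<and> gs n ` cball p' r' \<subseteq> ball p r \<and>
     (\<forall>y z k u v. k \<le> n \<longrightarrow> u \<in> cball p' r' \<longrightarrow> v \<in> cball p' r' \<longrightarrow>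
        (comp_prefix gs n y u, comp_prefix gs n z (gs n v)) \<notin> C k \<and>
        (comp_prefix gs n y (gs n v), comp_prefix gs n z u) \<notin> C k) \<and>
     (\<forall>y u v. u \<in> cball p' r' \<longrightarrow> v \<in> cball p' r' \<longrightarrow>
        dist (comp_prefix gs (Suc n) y u) (comp_prefix gs (Suc n) y v) < (1/2)^n)"

lemma fusion_step_cong:
  assumes "\<And>k. k \<le> n \<Longrightarrow> gs k = gs' k"
  shows "fusion_step C gs n p r p' r' = fusion_step C gs' n p r p' r'"
proof -
  have "comp_prefix gs m y = comp_prefix gs' m y" if "m \<le> Suc n" for m y
    using that assms by (intro comp_prefix_cong) auto
  then show ?thesis using assms[of n] by (simp add: fusion_step_def del: comp_prefix.simps)
qed

lemma separating_open_pair: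
  fixes n :: nat
  assumes Hs: "finite Hs" "Hs \<subseteq> G" and C: "\<And>k. closed (C k) \<and> orbit_splitting (C k)"
    and U: "open U" "U \<inter> Orb \<noteq> {}"
  obtains A B where "open A" "open B" "A \<subseteq> U" "B \<subseteq> U" "A \<inter> Orb \<noteq> {}" "B \<inter> Orb \<noteq> {}"
    "\<forall>h\<in>Hs. \<forall>h'\<in>Hs. \<forall>k\<le>n. \<forall>a\<in>A. \<forall>b\<in>B. (h a, h' b) \<notin> C k \<and> (h b, h' a) \<notin> C k"
proof -
  define \<C> where "\<C> = (\<lambda>(h, h', k). map_prod h h' -` C k) ` (Hs \<times> Hs \<times> {..n})"
  have "finite \<C>" unfolding \<C>_def using Hs(1) by (intro finite_imageI finite_cartesian_product) auto
  moreover have "closed D \<and> orbit_splitting D" if D: "D \<in> \<C>" for D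
  proof -
    obtain h h' k where hk: "h \<in> Hs" "h' \<in> Hs" "D = map_prod h h' -` C k"
      using D unfolding \<C>_def by auto
    then have "h \<in> G" "h' \<in> G" using Hs(2) by auto
    then show ?thesis
      using hk(3) C[of k] closed_vimage_map_prod[OF continuous_on_G continuous_on_G]
        orbit_splitting_vimage
      by simp
  qed
  ultimately have "\<exists>A B. open A \<and> open B \<and> A \<subseteq> U \<and> B \<subseteq> U \<and> A \<inter> Orb \<noteq> {} \<and> B \<inter> Orb \<noteq> {} \<and>
    (\<forall>D\<in>\<C>. (A \<times> B) \<inter> D = {} \<and> (B \<times> A) \<inter> D = {})"
    using separate_by_box_finite[OF _ _ U U] by blast
  then obtain A B where AB: "open A" "open B" "A \<subseteq> U" "B \<subseteq> U"
    "A \<inter> Orb \<noteq> {}" "B \<inter> Orb \<noteq> {}" "\<forall>D\<in>\<C>. (A \<times> B) \<inter> D = {} \<and> (B \<times> A) \<inter> D = {}"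
    by meson
  show ?thesis
  proof (rule that[OF AB(1-6)], intro ballI allI impI)
    fix h h' k a b assume hk: "h \<in> Hs" "h' \<in> Hs" "k \<le> n" and ab: "a \<in> A" "b \<in> B"
    have "map_prod h h' -` C k \<in> \<C>"
      unfolding \<C>_def using hk by (intro image_eqI[of _ _ "(h, h', k)"]) auto
    then have "(A \<times> B) \<inter> (map_prod h h' -` C k) = {}" "(B \<times> A) \<inter> (map_prod h h' -` C k) = {}"
      using AB(7) by auto
    then show "(h a, h' b) \<notin> C k \<and> (h b, h' a) \<notin> C k"
      using ab by auto
  qed
qed

lemma fusion_step_exists:
  assumes gs: "\<And>k. k < n \<Longrightarrow> gs k \<in> G" and p: "p \<in> Orb" "r > 0"
    and C: "\<And>k. closed (C k) \<and> orbit_splitting (C k)"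
  obtains g p' r' where "p' \<in> Orb" "r' > 0" "fusion_step C (gs(n := g)) n p r p' r'"
proof -
  define Hs where "Hs = range (comp_prefix gs n)"
  have Hs: "finite Hs" "Hs \<subseteq> G"
    unfolding Hs_def using finite_range_comp_prefix comp_prefix_in_G gs by blast+
  have "p \<in> ball p r \<inter> Orb" using p by simp
  then have "ball p r \<inter> Orb \<noteq> {}" by blast
  then obtain A B where AB: "open A" "open B" "A \<subseteq> ball p r" "B \<subseteq> ball p r"
    "A \<inter> Orb \<noteq> {}" "B \<inter> Orb \<noteq> {}"
    and separated: "\<forall>h\<in>Hs. \<forall>h'\<in>Hs. \<forall>k\<le>n. \<forall>a\<in>A. \<forall>b\<in>B.
      (h a, h' b) \<notin> C k \<and> (h b, h' a) \<notin> C k"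
    by (rule separating_open_pair[OF Hs C open_ball])
  obtain a b where ab: "a \<in> A" "a \<in> Orb" "b \<in> B" "b \<in> Orb" using AB(5,6) by blast
  obtain g where g: "g \<in> G" "g a = b" using Orb_transitive ab(2,4) .
  define K where "K = (\<lambda>(h, c). h \<circ> (if c then g else id)) ` (Hs \<times> UNIV)"
  have "finite K" unfolding K_def using Hs(1) by simp
  moreover have "K \<subseteq> G" unfolding K_def using Hs(2) g(1) comp_in_G id_in_G by auto
  then have "isCont k a" if "k \<in> K" for k
    using that continuous_on_G by (auto simp: continuous_on_eq_continuous_at)
  moreover have "open (A \<inter> g -` B)" "a \<in> A \<inter> g -` B"
    using AB(1,2) ab g open_vimage[OF _ continuous_on_G] by auto
  moreover have "(1/2::real)^n / 2 > 0" by simp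
  ultimately obtain d where d: "d > 0" "cball a d \<subseteq> A \<inter> g -` B"
    and small: "\<forall>k\<in>K. \<forall>u\<in>cball a d. dist (k u) (k a) < (1/2)^n / 2"
    by (rule finite_isCont_cball)
  have prefix_upd: "comp_prefix (gs(n := g)) n = comp_prefix gs n"
    by (intro ext comp_prefix_cong) auto
  have diameter: "dist (comp_prefix (gs(n := g)) (Suc n) y u) (comp_prefix (gs(n := g)) (Suc n) y v)
      < (1/2)^n" if "u \<in> cball a d" "v \<in> cball a d" for y u v
  proof -
    define k where "k = comp_prefix gs n y \<circ> (if y n then g else id)"
    have "k \<in> K" unfolding K_def k_def Hs_def by (rule image_eqI[of _ _ "(_, y n)"]) auto
    then have "dist (k u) (k a) < (1/2)^n / 2" "dist (k v) (k a) < (1/2)^n / 2"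
      using small that by auto
    then have "dist (k u) (k v) < (1/2)^n"
      using dist_triangle_half_l[of "k u" "k a" _ "k v"] by (simp add: dist_commute)
    then show ?thesis by (cases "y n") (simp_all add: prefix_upd k_def)
  qed
  have "fusion_step C (gs(n := g)) n p r a d"
    unfolding fusion_step_def prefix_upd fun_upd_same
  proof (intro conjI allI impI)
    show "cball a d \<subseteq> ball p r" "g ` cball a d \<subseteq> ball p r" using d(2) AB(3,4) by auto
    fix y z k u v assume "k \<le> n" "u \<in> cball a d" "v \<in> cball a d"
    moreover have "comp_prefix gs n y \<in> Hs" "comp_prefix gs n z \<in> Hs" by (simp_all add: Hs_def)
    ultimately show "(comp_prefix gs n y u, comp_prefix gs n z (g v)) \<notin> C k"
      "(comp_prefix gs n y (g v), comp_prefix gs n z u) \<notin> C k"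
      using separated d(2) by blast+
  qed (use g(1) diameter in auto)
  with ab(2) d(1) show ?thesis by (rule that)
qed

end

locale fusion_sequence = homeo_orbit +
  fixes C :: "nat \<Rightarrow> ('a \<times> 'a) set" and gs :: "nat \<Rightarrow> 'a \<Rightarrow> 'a"
    and p :: "nat \<Rightarrow> 'a" and r :: "nat \<Rightarrow> real"
  assumes step: "\<And>n. fusion_step C gs n (p n) (r n) (p (Suc n)) (r (Suc n))"
    and p_in_Orb: "\<And>n. p n \<in> Orb" and r_pos: "\<And>n. r n > 0" and C_0: "C 0 = Id"
begin

lemma gs_in_G: "gs k \<in> G"
  using step[of k] by (simp add: fusion_step_def)

lemma comp_prefix_gs_in_G: "comp_prefix gs n y \<in> G"
  using comp_prefix_in_G gs_in_G by blast

definition cell :: "nat \<Rightarrow> (nat \<Rightarrow> bool) \<Rightarrow> 'a set" where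
  "cell n y = comp_prefix gs n y ` cball (p n) (r n)"

lemma closed_cell: "closed (cell n y)"
  unfolding cell_def by (rule closed_image_G[OF comp_prefix_gs_in_G closed_cball])

lemma center_in_cell: "comp_prefix gs n y (p n) \<in> cell n y"
  unfolding cell_def using r_pos[of n] by simp

lemma cell_Suc:
  "cell (Suc n) y = comp_prefix gs n y ` (if y n then gs n else id) ` cball (p (Suc n)) (r (Suc n))"
  unfolding cell_def by (simp add: image_comp)

lemma cell_Suc_subset: "cell (Suc n) y \<subseteq> cell n y"
  unfolding cell_Suc unfolding cell_def using step[of n]
  by (intro image_mono) (auto simp: fusion_step_def)

lemma cell_antimono: "m \<le> n \<Longrightarrow> cell n y \<subseteq> cell m y"
  using lift_Suc_antimono_le[of "\<lambda>n. cell n y"] cell_Suc_subset by blast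

lemma dist_cell_Suc: "u \<in> cell (Suc m) y \<Longrightarrow> v \<in> cell (Suc m) y \<Longrightarrow> dist u v < (1/2)^m"
  using step[of m] unfolding cell_def fusion_step_def by auto

lemma cell_cong: "(\<And>k. k < n \<Longrightarrow> y k = z k) \<Longrightarrow> cell n y = cell n z"
  unfolding cell_def by (metis comp_prefix_cong)

definition phi :: "(nat \<Rightarrow> bool) \<Rightarrow> 'a" where
  "phi y = the_elem (\<Inter>n. cell n y)"

lemma Inter_cell: "(\<Inter>n. cell n y) = {phi y}"
proof -
  have "\<exists>a. (\<Inter>n. cell n y) = {a}"
  proof (rule decreasing_closed_nest_sing)
    show "closed (cell n y)" for n by (rule closed_cell)
    show "cell n y \<noteq> {}" for n using center_in_cell by blast
    show "cell n y \<subseteq> cell m y" if "m \<le> n" for m n using that by (rule cell_antimono)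
  next
    fix e :: real assume "e > 0"
    then obtain m where "(1/2::real)^m < e" using real_arch_pow_inv[of e "1/2"] by auto
    then show "\<exists>n. \<forall>u\<in>cell n y. \<forall>v\<in>cell n y. dist u v < e"
      using dist_cell_Suc by (metis order.strict_trans)
  qed
  then obtain a where a: "(\<Inter>n. cell n y) = {a}" by blast
  then show ?thesis by (simp add: phi_def)
qed

lemma phi_in_cell: "phi y \<in> cell n y"
  using Inter_cell by blast

lemma in_all_cells_eq_phi: "(\<And>n. a \<in> cell n y) \<Longrightarrow> a = phi y"
  using Inter_cell by blast

lemma dist_phi_less: "(\<And>k. k \<le> m \<Longrightarrow> y k = z k) \<Longrightarrow> dist (phi y) (phi z) < (1/2)^m"
  using dist_cell_Suc phi_in_cell cell_cong[of "Suc m" y z] by (metis less_Suc_eq_le)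

lemma continuous_phi: "continuous_on UNIV phi"
  unfolding continuous_on_topological
proof (intro ballI allI impI)
  fix y :: "nat \<Rightarrow> bool" and B assume B: "open B" "phi y \<in> B"
  obtain e where e: "e > 0" "ball (phi y) e \<subseteq> B" using B open_contains_ball by blast
  obtain m where m: "(1/2::real)^m < e" using real_arch_pow_inv[OF e(1), of "1/2"] by auto
  define A where "A = (\<Inter>k\<in>{..m}. (\<lambda>z::nat \<Rightarrow> bool. z k) -` {y k})"
  show "\<exists>A. open A \<and> y \<in> A \<and> (\<forall>z\<in>UNIV. z \<in> A \<longrightarrow> phi z \<in> B)"
  proof (intro exI conjI ballI impI)
    show "open A" unfolding A_def
      by (intro open_INT ballI finite_atMost
          open_vimage[OF open_discrete continuous_on_product_coordinates])
    show "y \<in> A" unfolding A_def by simp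
    fix z assume "z \<in> A"
    then have "dist (phi y) (phi z) < (1/2)^m" unfolding A_def by (intro dist_phi_less) auto
    then show "phi z \<in> B" using e m by auto
  qed
qed

lemma phi_in_closure: "phi y \<in> closure Orb"
  unfolding closure_approachable
proof (intro allI impI)
  fix e :: real assume "e > 0"
  then obtain m where m: "(1/2::real)^m < e" using real_arch_pow_inv[of e "1/2"] by auto
  let ?x = "comp_prefix gs (Suc m) y (p (Suc m))"
  have "?x \<in> Orb" using G_image_Orb[OF comp_prefix_gs_in_G p_in_Orb] .
  moreover have "dist ?x (phi y) < (1/2)^m" by (rule dist_cell_Suc[OF center_in_cell phi_in_cell])
  then have "dist ?x (phi y) < e" using m by linarith
  ultimately show "\<exists>x\<in>Orb. dist x (phi y) < e" by blast
qed

lemma phi_separated: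
  assumes "y n \<noteq> z n" "k \<le> n" shows "(phi y, phi z) \<notin> C k"
proof -
  obtain u where u: "u \<in> cball (p (Suc n)) (r (Suc n))"
    "phi y = comp_prefix gs n y (if y n then gs n u else u)"
    using phi_in_cell[of y "Suc n"] unfolding cell_Suc by auto
  obtain v where v: "v \<in> cball (p (Suc n)) (r (Suc n))"
    "phi z = comp_prefix gs n z (if z n then gs n v else v)"
    using phi_in_cell[of z "Suc n"] unfolding cell_Suc by auto
  show ?thesis
    using step[of n] assms u v unfolding fusion_step_def by (cases "y n") auto
qed

lemma inj_phi: "inj phi"
proof (rule injI)
  fix y z assume "phi y = phi z"
  then have "y n = z n" for n using phi_separated[of y n z 0] C_0 by auto
  then show "y = z" by blast
qed

lemma phi_not_E0: "\<not> E0 y z \<Longrightarrow> (phi y, phi z) \<notin> C k"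
  unfolding E0_def by (metis less_imp_le phi_separated)

lemma phi_E0:
  assumes "E0 y z" shows "\<exists>g\<in>G. g (phi y) = phi z"
proof -
  obtain N where N: "\<And>m. m > N \<Longrightarrow> y m = z m" using assms unfolding E0_def by blast
  obtain h where h: "h \<in> G" "homeomorphism UNIV UNIV (comp_prefix gs (Suc N) y) h"
    using homeomorphism_G[OF comp_prefix_gs_in_G] .
  define g where "g = comp_prefix gs (Suc N) z \<circ> h"
  have g: "g \<in> G" unfolding g_def using comp_in_G[OF comp_prefix_gs_in_G h(1)] .
  have "g \<circ> comp_prefix gs m y = comp_prefix gs m z" if "Suc N \<le> m" for m
    using that
  proof (induction m rule: dec_induct)
    case base
    show ?case using h(2) by (simp add: g_def fun_eq_iff homeomorphism_def)
  next
    case (step m)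
    then have "y m = z m" using N by simp
    have "g \<circ> comp_prefix gs (Suc m) y = (g \<circ> comp_prefix gs m y) \<circ> (if y m then gs m else id)"
      by (simp add: comp_assoc)
    also have "\<dots> = comp_prefix gs (Suc m) z"
      by (simp only: step.IH comp_prefix.simps \<open>y m = z m\<close>)
    finally show ?case .
  qed
  then have "g ` cell m y = cell m z" if "Suc N \<le> m" for m
    using that by (simp add: cell_def image_comp)
  then have "g (phi y) \<in> cell m z" for m
    using phi_in_cell cell_antimono[of m "max m (Suc N)" z]
    by (metis image_eqI max.cobounded1 max.cobounded2 subsetD)
  then show ?thesis using g in_all_cells_eq_phi by blast
qed

end

context homeo_orbit
begin

lemma closed_orbit_splitting_cover:
  fixes R :: "nat \<Rightarrow> ('a \<times> 'a) set"
  assumes "\<And>n. fsigma_in euclidean (R n)" "\<And>n. orbit_splitting (R n)" "orbit_splitting Id"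
  obtains C :: "nat \<Rightarrow> ('a \<times> 'a) set"
  where "\<And>k. closed (C k) \<and> orbit_splitting (C k)" "C 0 = Id" "(\<Union>n. R n) \<subseteq> (\<Union>k. C k)"
proof -
  obtain D :: "nat \<Rightarrow> ('a \<times> 'a) set"
    where D: "\<And>k. closed (D k)" "\<And>k. \<exists>n. D k \<subseteq> R n" "(\<Union>n. R n) = (\<Union>k. D k)"
    using fsigma_family_closed_enumeration[of R, OF assms(1)] by blast
  define C where "C = case_nat Id D"
  have "closed (C k) \<and> orbit_splitting (C k)" for k
  proof (cases k)
    case 0
    then show ?thesis using assms(3) closed_diagonal by (simp add: C_def Id_def)
  next
    case (Suc j)
    obtain n where "D j \<subseteq> R n" using D(2) by blast
    then show ?thesis using D(1) orbit_splitting_subset assms(2) Suc by (simp add: C_def)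
  qed
  moreover have "(\<Union>n. R n) \<subseteq> (\<Union>k. C k)"
  proof
    fix x assume "x \<in> (\<Union>n. R n)"
    then obtain k where "x \<in> D k" unfolding D(3) by blast
    then have "x \<in> C (Suc k)" by (simp add: C_def)
    then show "x \<in> (\<Union>k. C k)" by blast
  qed
  ultimately show ?thesis using that[of C] by (simp add: C_def)
qed

lemma fusion_sequence_exists:
  assumes C: "\<And>k. closed (C k) \<and> orbit_splitting (C k)" and C_0: "C 0 = Id"
  obtains gs p r where "fusion_sequence G Orb x0 C gs p r"
proof -
  define P :: "nat \<Rightarrow> (nat \<Rightarrow> 'a \<Rightarrow> 'a) \<times> 'a \<times> real \<Rightarrow> bool"
    where "P n = (\<lambda>(gs, p, r). (\<forall>k<n. gs k \<in> G) \<and> p \<in> Orb \<and> r > 0)" for n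
  define Q :: "nat \<Rightarrow> (nat \<Rightarrow> 'a \<Rightarrow> 'a) \<times> 'a \<times> real \<Rightarrow> (nat \<Rightarrow> 'a \<Rightarrow> 'a) \<times> 'a \<times> real \<Rightarrow> bool"
    where "Q n = (\<lambda>(gs, p, r) (gs', p', r'). (\<forall>k<n. gs' k = gs k) \<and> fusion_step C gs' n p r p' r')"
    for n
  have "x0 \<in> Orb" unfolding Orb_eq using id_in_G by (rule rev_image_eqI) simp
  then have "P 0 (\<lambda>_. id, x0, 1)" by (simp add: P_def)
  moreover have "\<exists>x'. P (Suc n) x' \<and> Q n x x'" if "P n x" for n x
  proof -
    obtain gs p r where x: "x = (gs, p, r)" "\<And>k. k < n \<Longrightarrow> gs k \<in> G" "p \<in> Orb" "r > 0"
      using \<open>P n x\<close> by (auto simp: P_def)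
    obtain g p' r' where "p' \<in> Orb" "r' > 0" "fusion_step C (gs(n := g)) n p r p' r'"
      using fusion_step_exists[OF x(2-4) C] .
    then have "P (Suc n) (gs(n := g), p', r') \<and> Q n x (gs(n := g), p', r')"
      using x by (auto simp: P_def Q_def fusion_step_def less_Suc_eq)
    then show ?thesis ..
  qed
  ultimately obtain f where f: "\<And>n. P n (f n)" "\<And>n. Q n (f n) (f (Suc n))"
    using dependent_nat_choice[of P Q] by blast
  define gs where "gs k = fst (f (Suc k)) k" for k
  have agree: "\<forall>k<n. fst (f n) k = gs k" for n
  proof (induction n)
    case (Suc n)
    then show ?case using f(2)[of n] by (auto simp: Q_def gs_def less_Suc_eq split: prod.splits)
  qed simp
  define pp where "pp n = fst (snd (f n))" for n
  define rr where "rr n = snd (snd (f n))" for n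
  have "fusion_sequence G Orb x0 C gs pp rr"
  proof unfold_locales
    show "fusion_step C gs n (pp n) (rr n) (pp (Suc n)) (rr (Suc n))" for n
      using f(2)[of n] fusion_step_cong[of n "fst (f (Suc n))" gs] agree[of "Suc n"]
      by (auto simp: Q_def pp_def rr_def split: prod.splits)
    show "pp n \<in> Orb" "rr n > 0" for n
      using f(1)[of n] by (auto simp: P_def pp_def rr_def split: prod.splits)
  qed (rule C_0)
  then show ?thesis by (rule that)
qed

end

theorem theorem2p2:
  fixes R :: "nat \<Rightarrow> ('a::polish_space \<times> 'a) set"
    and G :: "('a \<Rightarrow> 'a) set"
    and Orb :: "'a set"
  assumes Fsig: "\<And>n. fsigma_in euclidean (R n)"
    and grp: "homeo_group G"
    and orbit: "\<exists>x0. Orb = (\<lambda>g. g x0) ` G"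
    and hyp: "\<And>n U. open U \<Longrightarrow> U \<inter> Orb \<noteq> {} \<Longrightarrow>
               \<exists>x y. x \<noteq> y \<and> x \<in> Orb \<inter> U \<and> y \<in> Orb \<inter> U \<and>
                     Orb \<inter> (R n `` {x}) \<inter> (R n `` {y}) = {}"
  shows "\<exists>\<phi> :: (nat \<Rightarrow> bool) \<Rightarrow> 'a.
           continuous_on UNIV \<phi> \<and> inj \<phi> \<and> \<phi> ` UNIV \<subseteq> closure Orb \<and>
           (\<forall>y z. (E0 y z \<longrightarrow> (\<exists>g\<in>G. g (\<phi> y) = \<phi> z)) \<and>
                  (\<not> E0 y z \<longrightarrow> (\<phi> y, \<phi> z) \<notin> (\<Union>n. R n)))"
proof -
  obtain x0 where "Orb = (\<lambda>g. g x0) ` G" using orbit by blast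
  then interpret homeo_orbit G Orb x0 by unfold_locales (rule grp)
  have splitting_R: "orbit_splitting (R n)" for n by (rule orbit_splittingI) (use hyp in meson)
  have splitting_Id: "orbit_splitting Id" by (rule orbit_splitting_Id) (use hyp in meson)
  obtain C :: "nat \<Rightarrow> ('a \<times> 'a) set" where C: "\<And>k. closed (C k) \<and> orbit_splitting (C k)" "C 0 = Id"
    "(\<Union>n. R n) \<subseteq> (\<Union>k. C k)"
    using closed_orbit_splitting_cover[of R, OF Fsig splitting_R splitting_Id] by blast
  obtain gs p r where "fusion_sequence G Orb x0 C gs p r"
    by (rule fusion_sequence_exists[where C=C, OF C(1,2)])
  then interpret fusion_sequence G Orb x0 C gs p r .
  have "(phi y, phi z) \<notin> (\<Union>n. R n)" if "\<not> E0 y z" for y z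
    using phi_not_E0[OF that] C(3) by blast
  then show ?thesis
    using continuous_phi inj_phi phi_in_closure phi_E0 by (intro exI[of _ phi]) auto
qed

end
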